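(* Let $V$ and $Z$ be $5$-dimensional even isotropic subspaces of $\mathbb{F}_2^{10}$. Then there exist $5$-dimensional even isotropic subspaces $V_0=V,V_1,\dots,V_n=Z$ of $\mathbb{F}_2^{10}$ and $3$-dimensional even isotropic subspaces $M_1,\dots,M_n$ of $\mathbb{F}_2^{10}$ such that $M_i\subset V_{i-1}\cap V_i$ for all $i=1,\dots,n$.
   Context: Elements of $\mathbb{F}_2^{10}$ are written $m=[\varepsilon,\delta]$ with $\varepsilon,\delta\in\mathbb{F}_2^5$; $m$ is even if $\varepsilon\cdot\delta=0\in\mathbb{F}_2$. For $m=[\varepsilon,\delta]$, $n=[\varepsilon_1,\delta_1]$ put $e(m,n)=(-1)^{\varepsilon\cdot\delta_1+\varepsilon_1\cdot\delta}$. A linear subspace $V$ is isotropic if $e(m,n)=1$ for all $m,n\in V$, and it is even isotropic if moreover all its elements are even. *)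

theory Defs
  imports "HOL-Analysis.Analysis" "HOL-Library.Z2"
begin

text \<open>F_2^10 is modelled as bit^(5+5); m = [eps, delta] with eps = Inl-part, delta = Inr-part.\<close>

type_synonym F2_10 = "bit ^ (5 + 5)"

definition eps :: "F2_10 \<Rightarrow> 5 \<Rightarrow> bit" where
  "eps m i = m $ Inl i"

definition dlt :: "F2_10 \<Rightarrow> 5 \<Rightarrow> bit" where
  "dlt m i = m $ Inr i"

definition dot5 :: "(5 \<Rightarrow> bit) \<Rightarrow> (5 \<Rightarrow> bit) \<Rightarrow> bit" where
  "dot5 a b = (\<Sum>i\<in>UNIV. a i * b i)"

definition even_char :: "F2_10 \<Rightarrow> bool" where
  "even_char m \<longleftrightarrow> dot5 (eps m) (dlt m) = 0"

definition e_pair :: "F2_10 \<Rightarrow> F2_10 \<Rightarrow> int" where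
  "e_pair m n = (if dot5 (eps m) (dlt n) + dot5 (eps n) (dlt m) = 0 then 1 else -1)"

definition isotropic :: "F2_10 set \<Rightarrow> bool" where
  "isotropic V \<longleftrightarrow> vec.subspace V \<and> (\<forall>m\<in>V. \<forall>n\<in>V. e_pair m n = 1)"

definition even_isotropic :: "F2_10 set \<Rightarrow> bool" where
  "even_isotropic V \<longleftrightarrow> isotropic V \<and> (\<forall>m\<in>V. even_char m)"

end

theory Submission
  imports Defs
begin

text \<open>
  Write \<open>B(m,n) = \<epsilon>\<cdot>\<delta>\<^sub>1 + \<epsilon>\<^sub>1\<cdot>\<delta>\<close> for the alternating form whose sign is \<open>e(m,n)\<close>, and
  \<open>q(m) = \<epsilon>\<cdot>\<delta>\<close>, a quadratic form polarising to \<open>B\<close>. Since \<open>B(m,n)\<close> is the standard dot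
  product of \<open>n\<close> with \<open>m\<close> with its halves swapped, and that product is nondegenerate, an
  isotropic subspace has dimension at most 5.

  Given 5-dimensional even isotropic \<open>V \<noteq> Z\<close>, pick \<open>z \<in> Z - V\<close>. The hyperplane
  \<open>H = {v \<in> V. B(z,v) = 0}\<close> of \<open>V\<close> has dimension at least 4, and \<open>V' = span (H \<union> {z})\<close> is
  again even isotropic, hence of dimension exactly 5. Any 3-dimensional subspace of \<open>H\<close> links
  \<open>V\<close> to \<open>V'\<close>, and \<open>V \<inter> Z \<subseteq> H\<close> gives \<open>V \<inter> Z \<subset> V' \<inter> Z\<close>. Induction on
  \<open>5 - dim (V \<inter> Z)\<close> produces the chain.
\<close>

lemma (in finite_dimensional_vector_space) dim_le_dim_kernel_plus_one:
  assumes l: "Vector_Spaces.linear scale (*) l" and S: "subspace S"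
  shows "dim S \<le> dim {x\<in>S. l x = 0} + 1"
proof (cases "\<exists>s\<in>S. l s \<noteq> 0")
  case False
  then have "{x\<in>S. l x = 0} = S" by auto
  then show ?thesis by simp
next
  case True
  then obtain s where s: "s \<in> S" "l s \<noteq> 0" by blast
  interpret l: Vector_Spaces.linear scale "(*)" l by fact
  define K where "K = {x\<in>S. l x = 0}"
  have "S \<subseteq> span (insert s K)"
  proof
    fix x assume x: "x \<in> S"
    define c where "c = l x / l s"
    have "x - scale c s \<in> K"
      using s x S by (simp add: K_def c_def l.diff l.scale subspace_diff subspace_scale)
    then have "(x - scale c s) + scale c s \<in> span (insert s K)"
      by (intro span_add span_scale) (auto intro: span_base)
    then show "x \<in> span (insert s K)" by simp
  qed
  then have "dim S \<le> dim (insert s K)" by (rule dim_mono)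
  also have "\<dots> \<le> dim K + 1" by (simp add: dim_insert)
  finally show ?thesis by (simp add: K_def)
qed

definition vdot :: "'a::comm_semiring_1^'n \<Rightarrow> 'a^'n \<Rightarrow> 'a" where
  "vdot x y = (\<Sum>i\<in>UNIV. x $ i * y $ i)"

definition annihilator :: "('a::comm_semiring_1^'n) set \<Rightarrow> ('a^'n) set" where
  "annihilator W = {y. \<forall>w\<in>W. vdot w y = 0}"

lemma vdot_add_left: "vdot (x + y) z = vdot x z + vdot y z"
  by (simp add: vdot_def distrib_right sum.distrib)

lemma vdot_add_right: "vdot x (y + z) = vdot x y + vdot x z"
  by (simp add: vdot_def distrib_left sum.distrib)

lemma vdot_scale_left: "vdot (c *s x) y = c * vdot x y"
  by (simp add: vdot_def sum_distrib_left mult.assoc)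

lemma vdot_scale_right: "vdot x (c *s y) = c * vdot x y"
  by (simp add: vdot_def sum_distrib_left mult.left_commute)

lemma vdot_axis_left: "vdot (axis k 1) y = y $ k"
proof -
  have "vdot (axis k 1) y = (\<Sum>i\<in>UNIV. if i = k then y $ i else 0)"
    unfolding vdot_def by (intro sum.cong) (auto simp: axis_def)
  then show ?thesis by simp
qed

lemma linear_vdot_right: "Vector_Spaces.linear (*s) (*) (vdot x :: 'a::field^'n \<Rightarrow> 'a)"
  by (simp add: Vector_Spaces.linear_iff vec.vector_space_axioms
      vector_space_over_itself.vector_space_axioms vdot_add_right vdot_scale_right)

lemma annihilator_span: "annihilator (vec.span S) = annihilator S"
proof
  show "annihilator S \<subseteq> annihilator (vec.span S)"
  proof
    fix y assume y: "y \<in> annihilator S"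
    have "vec.subspace {x. vdot x y = 0}"
      by (simp add: vec.subspace_def vdot_add_left vdot_scale_left) (simp add: vdot_def)
    then have "vec.span S \<subseteq> {x. vdot x y = 0}"
      using y by (intro vec.span_minimal) (auto simp: annihilator_def)
    then show "y \<in> annihilator (vec.span S)" by (auto simp: annihilator_def)
  qed
qed (auto simp: annihilator_def intro: vec.span_base)

lemma annihilator_UNIV: "annihilator (UNIV :: ('a::comm_semiring_1^'n) set) = {0}"
proof -
  have "y = 0" if "\<forall>w. vdot w y = 0" for y :: "'a^'n"
    using that by (metis vdot_axis_left vec_eq_iff zero_index)
  then show ?thesis by (auto simp: annihilator_def vdot_def)
qed

lemma dim_add_dim_annihilator_le:
  fixes W :: "('a::field^'n) set"
  shows "vec.dim W + vec.dim (annihilator W) \<le> CARD('n)"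
proof -
  obtain B where B: "B \<subseteq> W" "vec.independent B" "card B = vec.dim W"
    by (meson vec.basis_exists)
  define B' where "B' = vec.extend_basis B"
  have BB': "B \<subseteq> B'" and B': "vec.independent B'" "vec.span B' = UNIV"
    using B(2) by (simp_all add: B'_def vec.extend_basis_superset
        vec.independent_extend_basis vec.span_extend_basis)
  have "card B' = vec.dim B'"
    using B'(1) by (simp add: vec.dim_eq_card_independent)
  also have "\<dots> = vec.dim (UNIV :: ('a^'n) set)"
    by (metis B'(2) vec.dim_span)
  also have "\<dots> = CARD('n)"
    by (rule vec_dim_card)
  finally obtain g where g: "bij_betw g (UNIV :: 'n set) B'"
    using finite_same_card_bij[of "UNIV :: 'n set" B'] B'(1) vec.finiteI_independent by auto
  \<comment> \<open>\<open>T\<close> is injective because \<open>B'\<close> spans everything, and it sends the annihilator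
    of \<open>W\<close> into the vectors vanishing at the positions \<open>g -` B\<close> of the basis of \<open>W\<close>.\<close>
  define T where "T y = (\<chi> i. vdot (g i) y)" for y :: "'a^'n"
  have linear_T: "Vector_Spaces.linear (*s) (*s) T"
    by (simp add: Vector_Spaces.linear_iff vec.vector_space_axioms T_def vec_eq_iff
        vdot_add_right vdot_scale_right)
  have "inj T"
  proof (subst vec.linear_inj_iff_eq_0[OF linear_T], intro allI impI)
    fix y assume "T y = 0"
    then have "y \<in> annihilator B'"
      using g by (auto simp: T_def vec_eq_iff annihilator_def bij_betw_def)
    then show "y = 0"
      using annihilator_span[of B'] by (auto simp: B'(2) annihilator_UNIV)
  qed
  define I where "I = g -` B"
  have card_I: "card I = card B"
    using g BB' by (simp add: I_def bij_betw_def card_vimage_inj)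
  have "T ` annihilator W \<subseteq> {x :: 'a^'n. \<forall>i. i \<notin> - I \<longrightarrow> x $ i = 0}"
    using B(1) by (auto simp: T_def I_def annihilator_def)
  then have "vec.dim (T ` annihilator W) \<le> vec.dim {x :: 'a^'n. \<forall>i. i \<notin> - I \<longrightarrow> x $ i = 0}"
    by (rule vec.dim_subset)
  also have "\<dots> = card (- I)"
    by (rule dim_substandard_cart)
  finally have "vec.dim (T ` annihilator W) \<le> card (- I)" .
  moreover have "vec.dim (T ` annihilator W) = vec.dim (annihilator W)"
    using \<open>inj T\<close> by (simp add: vec.dim_image_eq[OF linear_T] inj_on_subset)
  moreover have "card (- I) = CARD('n) - card I"
    by (simp add: Compl_eq_Diff_UNIV card_Diff_subset)
  moreover have "card I \<le> CARD('n)" by (simp add: card_mono)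
  ultimately show ?thesis using card_I B(3) by linarith
qed

text \<open>Z2 rewrites \<open>+\<close> and \<open>*\<close> on \<open>bit\<close> to \<open>xor\<close> and \<open>and\<close>; here they stay field operations.\<close>
declare add_bit_eq_xor [simp del] mult_bit_eq_and [simp del]

definition bform :: "F2_10 \<Rightarrow> F2_10 \<Rightarrow> bit" where
  "bform m n = dot5 (eps m) (dlt n) + dot5 (eps n) (dlt m)"

definition qform :: "F2_10 \<Rightarrow> bit" where
  "qform m = dot5 (eps m) (dlt m)"

definition swap_halves :: "F2_10 \<Rightarrow> F2_10" where
  "swap_halves x = (\<chi> k. case k of Inl i \<Rightarrow> x $ Inr i | Inr i \<Rightarrow> x $ Inl i)"

lemma even_isotropic_iff:
  "even_isotropic V \<longleftrightarrow>
     vec.subspace V \<and> (\<forall>m\<in>V. \<forall>n\<in>V. bform m n = 0) \<and> (\<forall>m\<in>V. qform m = 0)"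
  by (simp add: even_isotropic_def isotropic_def e_pair_def even_char_def bform_def qform_def)

lemma bform_commute: "bform m n = bform n m"
  by (simp add: bform_def add.commute)

lemma bform_eq_vdot_swap_halves: "bform m n = vdot (swap_halves m) n"
proof -
  have "vdot (swap_halves m) n = (\<Sum>k\<in>(UNIV::5 set) <+> (UNIV::5 set). swap_halves m $ k * n $ k)"
    by (simp add: vdot_def UNIV_Plus_UNIV)
  also have "\<dots> = (\<Sum>i\<in>UNIV. m $ Inr i * n $ Inl i) + (\<Sum>i\<in>UNIV. m $ Inl i * n $ Inr i)"
    by (subst sum.Plus) (auto simp: swap_halves_def)
  finally show ?thesis
    by (simp add: bform_def dot5_def eps_def dlt_def mult.commute add.commute)
qed

lemma linear_bform_right: "Vector_Spaces.linear (*s) (*) (bform m)"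
  using linear_vdot_right[of "swap_halves m"] by (simp add: bform_eq_vdot_swap_halves[abs_def])

lemma linear_swap_halves: "Vector_Spaces.linear (*s) (*s) swap_halves"
  by (auto simp: Vector_Spaces.linear_iff swap_halves_def vec_eq_iff vec.vector_space_axioms
      split: sum.split)

lemma swap_halves_swap_halves [simp]: "swap_halves (swap_halves x) = x"
  by (simp add: swap_halves_def vec_eq_iff split: sum.split)

lemma qform_add: "qform (x + y) = qform x + qform y + bform x y"
  by (simp add: qform_def bform_def dot5_def eps_def dlt_def algebra_simps sum.distrib)

lemma qform_scale: "qform (c *s x) = c * c * qform x"
  by (simp add: qform_def dot5_def eps_def dlt_def sum_distrib_left algebra_simps)

lemma isotropic_dim_le_5:
  assumes "\<forall>m\<in>V. \<forall>n\<in>V. bform m n = 0"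
  shows "vec.dim V \<le> 5"
proof -
  have "V \<subseteq> annihilator (swap_halves ` V)"
    using assms by (auto simp: annihilator_def simp flip: bform_eq_vdot_swap_halves)
  then have "vec.dim V \<le> vec.dim (annihilator (swap_halves ` V))"
    by (rule vec.dim_subset)
  moreover have "vec.dim (swap_halves ` V) = vec.dim V"
    by (rule vec.dim_image_eq[OF linear_swap_halves]) (metis inj_onI swap_halves_swap_halves)
  moreover have "vec.dim (swap_halves ` V) + vec.dim (annihilator (swap_halves ` V)) \<le> 10"
    using dim_add_dim_annihilator_le[of "swap_halves ` V"] by simp
  ultimately show ?thesis by simp
qed

lemma bform_span_eq_0:
  assumes S: "\<forall>m\<in>S. \<forall>n\<in>S. bform m n = 0" and "m \<in> vec.span S" "n \<in> vec.span S"
  shows "bform m n = 0"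
proof -
  have bform_span_right: "bform a b = 0" if "\<forall>y\<in>S. bform a y = 0" "b \<in> vec.span S" for a b
    using that(2)
  proof (induction rule: vec.span_induct_alt)
    case (step c x y)
    then show ?case
      using that(1) linear_bform_right[of a] by (simp add: Vector_Spaces.linear_iff)
  qed (simp add: bform_def dot5_def eps_def dlt_def)
  have "\<forall>y\<in>S. bform n y = 0"
    using S \<open>n \<in> vec.span S\<close> by (metis bform_commute bform_span_right)
  then show ?thesis
    using \<open>m \<in> vec.span S\<close> by (metis bform_commute bform_span_right)
qed

lemma even_isotropic_span:
  assumes S: "\<forall>m\<in>S. \<forall>n\<in>S. bform m n = 0" and q: "\<forall>m\<in>S. qform m = 0"
  shows "even_isotropic (vec.span S)"
proof -
  have "x \<in> vec.span S \<and> qform x = 0" if "x \<in> vec.span S" for x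
    using that
  proof (induction rule: vec.span_induct_alt)
    case base
    then show ?case by (simp add: vec.span_zero qform_def dot5_def eps_def dlt_def)
  next
    case (step c x y)
    then have "bform x y = 0"
      using bform_span_eq_0[OF S] by (simp add: vec.span_base)
    then have "bform (c *s x) y = 0"
      using linear_bform_right[of y] by (simp add: bform_commute[of _ y] Vector_Spaces.linear_iff)
    then show ?case
      using step q by (simp add: qform_add qform_scale vec.span_add vec.span_scale vec.span_base)
  qed
  then show ?thesis
    using bform_span_eq_0[OF S] by (simp add: even_isotropic_iff)
qed

definition even_lagrangian :: "F2_10 set \<Rightarrow> bool" where
  "even_lagrangian V \<longleftrightarrow> even_isotropic V \<and> vec.dim V = 5"

definition adjacent :: "F2_10 set \<Rightarrow> F2_10 set \<Rightarrow> bool" where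
  "adjacent V W \<longleftrightarrow> even_lagrangian V \<and> even_lagrangian W \<and>
     (\<exists>M. even_isotropic M \<and> vec.dim M = 3 \<and> M \<subseteq> V \<inter> W)"

lemma exists_adjacent_closer:
  assumes V: "even_lagrangian V" and Z: "even_lagrangian Z" and z: "z \<in> Z" "z \<notin> V"
  obtains V' where "adjacent V V'" "vec.dim (V \<inter> Z) < vec.dim (V' \<inter> Z)"
proof -
  have sV: "vec.subspace V" and bV: "\<forall>m\<in>V. \<forall>n\<in>V. bform m n = 0" and qV: "\<forall>m\<in>V. qform m = 0"
    using V by (auto simp: even_lagrangian_def even_isotropic_iff)
  have sZ: "vec.subspace Z" and bZ: "\<forall>m\<in>Z. \<forall>n\<in>Z. bform m n = 0" and qZ: "\<forall>m\<in>Z. qform m = 0"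
    using Z by (auto simp: even_lagrangian_def even_isotropic_iff)
  define H where "H = {v\<in>V. bform z v = 0}"
  define V' where "V' = vec.span (insert z H)"
  have "5 \<le> vec.dim H + 1"
    using vec.dim_le_dim_kernel_plus_one[OF linear_bform_right sV] V
    by (simp add: H_def even_lagrangian_def)
  have span_H: "vec.span H \<subseteq> V"
    using vec.span_minimal[OF _ sV, of H] by (auto simp: H_def)
  have "\<forall>m\<in>insert z H. \<forall>n\<in>insert z H. bform m n = 0"
    using bV bZ z(1) by (auto simp: H_def) (metis bform_commute)
  moreover have "\<forall>m\<in>insert z H. qform m = 0"
    using qV qZ z(1) by (auto simp: H_def)
  ultimately have iso_V': "even_isotropic V'"
    unfolding V'_def by (rule even_isotropic_span)
  have "vec.dim V' = vec.dim H + 1"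
    using span_H z(2) by (auto simp: V'_def vec.dim_insert)
  moreover have "vec.dim V' \<le> 5"
    using iso_V' by (intro isotropic_dim_le_5) (simp add: even_isotropic_iff)
  ultimately have dim_V': "vec.dim V' = 5" and dim_H: "3 \<le> vec.dim H"
    using \<open>5 \<le> vec.dim H + 1\<close> by auto
  obtain M where M: "vec.subspace M" "M \<subseteq> vec.span H" "vec.dim M = 3"
    by (rule vec.choose_subspace_of_subspace[OF dim_H])
  have "M \<subseteq> V'"
    using M(2) vec.span_mono[of H "insert z H"] by (auto simp: V'_def)
  moreover have "M \<subseteq> V"
    using M(2) span_H by blast
  moreover have "even_isotropic M"
    using M(1) \<open>M \<subseteq> V\<close> bV qV by (auto simp: even_isotropic_iff)
  ultimately have "adjacent V V'"
    using V iso_V' dim_V' M(3) by (auto simp: adjacent_def even_lagrangian_def)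
  moreover have "vec.dim (V \<inter> Z) < vec.dim (V' \<inter> Z)"
  proof (rule vec.dim_psubset)
    have "V \<inter> Z \<subseteq> H"
      using bZ z(1) by (auto simp: H_def)
    then have "V \<inter> Z \<subset> V' \<inter> Z"
      using z vec.span_superset[of "insert z H"] by (auto simp: V'_def)
    moreover have "vec.subspace (V \<inter> Z)" "vec.subspace (V' \<inter> Z)"
      using sV sZ vec.subspace_span[of "insert z H"] by (simp_all add: V'_def vec.subspace_inter)
    ultimately show "vec.span (V \<inter> Z) \<subset> vec.span (V' \<inter> Z)"
      by (simp only: vec.span_eq_iff[THEN iffD2])
  qed
  ultimately show thesis by (rule that)
qed

lemma even_lagrangians_connected:
  assumes "even_lagrangian V" "even_lagrangian Z"
  shows "adjacent\<^sup>*\<^sup>* V Z"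
  using assms(1)
proof (induction "5 - vec.dim (V \<inter> Z)" arbitrary: V rule: less_induct)
  case less
  show ?case
  proof (cases "Z \<subseteq> V")
    case True
    then have "Z = V"
      using less.prems assms(2)
      by (intro vec.subspace_dim_equal) (auto simp: even_lagrangian_def even_isotropic_iff)
    then show ?thesis by simp
  next
    case False
    then obtain z where "z \<in> Z" "z \<notin> V" by blast
    with less.prems assms(2) obtain V' where V': "adjacent V V'" "vec.dim (V \<inter> Z) < vec.dim (V' \<inter> Z)"
      by (rule exists_adjacent_closer)
    moreover have "vec.dim (V' \<inter> Z) \<le> 5"
      using vec.dim_subset[of "V' \<inter> Z" Z] assms(2) by (auto simp: even_lagrangian_def)
    ultimately have "adjacent\<^sup>*\<^sup>* V' Z"
      using less.hyps[of V'] by (auto simp: adjacent_def)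
    with V'(1) show ?thesis by (rule converse_rtranclp_into_rtranclp)
  qed
qed

theorem mainTheorem5:
  fixes V Z :: "F2_10 set"
  assumes "even_isotropic V" "vec.dim V = 5"
      and "even_isotropic Z" "vec.dim Z = 5"
  shows "\<exists>(n::nat) (Vs :: nat \<Rightarrow> F2_10 set) (Ms :: nat \<Rightarrow> F2_10 set).
           Vs 0 = V \<and> Vs n = Z \<and>
           (\<forall>i\<le>n. even_isotropic (Vs i) \<and> vec.dim (Vs i) = 5) \<and>
           (\<forall>i\<in>{1..n}. even_isotropic (Ms i) \<and> vec.dim (Ms i) = 3 \<and>
                        Ms i \<subseteq> Vs (i - 1) \<inter> Vs i)"
proof -
  have "adjacent\<^sup>*\<^sup>* V Z"
    using assms by (simp add: even_lagrangians_connected even_lagrangian_def)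
  then obtain n Vs where Vs: "Vs 0 = V" "Vs n = Z" "\<forall>i<n. adjacent (Vs i) (Vs (Suc i))"
    by (metis rtranclp_imp_relpowp relpowp_fun_conv)
  then obtain Ms where Ms: "\<forall>i<n. even_isotropic (Ms i) \<and> vec.dim (Ms i) = 3 \<and>
                                  Ms i \<subseteq> Vs i \<inter> Vs (Suc i)"
    unfolding adjacent_def by metis
  have lagrangian: "even_lagrangian (Vs i)" if "i \<le> n" for i
    using that assms(1,2) Vs by (cases i) (auto simp: adjacent_def even_lagrangian_def)
  have link: "even_isotropic (Ms (i - 1)) \<and> vec.dim (Ms (i - 1)) = 3 \<and>
                 Ms (i - 1) \<subseteq> Vs (i - 1) \<inter> Vs i" if "i \<in> {1..n}" for i
    using that Ms by (cases i) auto
  show ?thesis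
    using Vs(1,2) lagrangian link unfolding even_lagrangian_def
    by (intro exI[of _ n] exI[of _ Vs] exI[of _ "\<lambda>i. Ms (i - 1)"] conjI) simp_all
qed

end
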